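(* Assume $a^1_K:=\langle[H_1,[H_0,H_1]]\varphi_1,\varphi_K\rangle\neq0$. There exists $T^*>0$ such that for every $T\in(0,T^* )$ and every real $s\in L^2(0,T)$, $-\operatorname{sign}(a^1_K)\,Q(s)\ge\frac{|a^1_K|}{8}\int_0^Ts(t)^2dt$, where $$Q(s)=-\frac{a^1_K}{2}\int_0^Ts(t)^2\cos[(\lambda_K-\lambda_1)(t-T)]dt+\sum_{j=1}^p\langle[H_0,H_1]\varphi_1,\varphi_j\rangle\langle[H_0,H_1]\varphi_j,\varphi_K\rangle\int_0^Ts(t)\int_0^ts(\tau)\sin\big(\lambda_j(\tau-t)+\lambda_K(t-T)+\lambda_1(T-\tau)\big)d\tau dt.$$
   Context: $H_0,H_1$ real symmetric $p\times p$ matrices, $[M,N]=MN-NM$, $(\varphi_j)$ a real orthonormal eigenbasis of $H_0$ with eigenvalues $\lambda_j$, $K\in\{1,\dots,p\}$, $\langle\cdot,\cdot\rangle$ the Hermitian product of $\mathbb{C}^p$. *)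

theory Defs
  imports "HOL-Analysis.Analysis"
begin

definition commut :: "real^'n^'n \<Rightarrow> real^'n^'n \<Rightarrow> real^'n^'n" where
  "commut M N = M ** N - N ** M"

definition Qform :: "real^'n^'n \<Rightarrow> real^'n^'n \<Rightarrow> (nat \<Rightarrow> real^'n) \<Rightarrow> (nat \<Rightarrow> real)
    \<Rightarrow> nat \<Rightarrow> real \<Rightarrow> (real \<Rightarrow> real) \<Rightarrow> real" where
  "Qform H0 H1 \<phi> lam K T s =
     (let a = (commut H1 (commut H0 H1) *v \<phi> 1) \<bullet> \<phi> K;
          B = commut H0 H1 in
      - (a / 2) * (LINT t:{0..T}|lborel. (s t)^2 * cos ((lam K - lam 1) * (t - T)))
      + (\<Sum>j=1..CARD('n). ((B *v \<phi> 1) \<bullet> \<phi> j) * ((B *v \<phi> j) \<bullet> \<phi> K) *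
          (LINT t:{0..T}|lborel. s t * (LINT \<tau>:{0..t}|lborel.
               s \<tau> * sin (lam j * (\<tau> - t) + lam K * (t - T) + lam 1 * (T - \<tau>))))))"

end

theory Submission imports Defs begin

(* On [0,T] with |\<lambda>K - \<lambda>1| T \<le> 1 the cosine weight is at least 1/2, so the first term of
   -sgn(a) Q(s) is at least |a|/4 times the integral of s^2.  Each iterated integral is bounded
   by the square of the integral of |s|, hence by Cauchy-Schwarz by T times the integral of s^2;
   for T small the sum of these terms therefore costs at most |a|/8 times the integral of s^2. *)

lemma set_integrable_const:
  fixes c :: real
  assumes "A \<in> sets M" "emeasure M A < \<infinity>"
  shows "set_integrable M A (\<lambda>_. c)"
  unfolding set_integrable_def using assms
  by (intro integrable_scaleR_left integrable_real_indicator)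

lemma set_integral_nonneg:
  fixes f :: "'a \<Rightarrow> real"
  assumes "\<And>x. x \<in> A \<Longrightarrow> 0 \<le> f x"
  shows "0 \<le> (LINT x:A|M. f x)"
  unfolding set_lebesgue_integral_def
  by (rule Bochner_Integration.integral_nonneg) (use assms in \<open>force simp: indicator_def\<close>)

lemma set_integral_abs_le:
  fixes f :: "'a \<Rightarrow> real"
  shows "\<bar>LINT x:A|M. f x\<bar> \<le> (LINT x:A|M. \<bar>f x\<bar>)"
  unfolding set_lebesgue_integral_def
  using integral_abs_bound[of M "\<lambda>x. indicator A x *\<^sub>R f x"]
  by (simp add: abs_mult)

text \<open>Only the dominating function needs to be integrable: a non-integrable \<open>f\<close> has integral 0.\<close>

lemma set_integral_mono_nonneg:
  fixes f g :: "'a \<Rightarrow> real"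
  assumes g: "set_integrable M A g" and f_nonneg: "\<And>x. x \<in> A \<Longrightarrow> 0 \<le> f x"
    and le: "\<And>x. x \<in> A \<Longrightarrow> f x \<le> g x"
  shows "(LINT x:A|M. f x) \<le> (LINT x:A|M. g x)"
proof (cases "set_integrable M A f")
  case True
  then show ?thesis using set_integral_mono[OF True g le] by simp
next
  case False
  then have "(LINT x:A|M. f x) = 0"
    unfolding set_integrable_def set_lebesgue_integral_def
    by (simp add: not_integrable_integral_eq)
  moreover have "0 \<le> (LINT x:A|M. g x)"
    using f_nonneg le by (intro set_integral_nonneg) force
  ultimately show ?thesis by simp
qed

lemma set_integrable_abs_of_square:
  fixes f :: "'a \<Rightarrow> real"
  assumes A: "A \<in> sets M" "emeasure M A < \<infinity>"
    and meas: "set_borel_measurable M A f" and sq: "set_integrable M A (\<lambda>x. (f x)^2)"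
  shows "set_integrable M A (\<lambda>x. \<bar>f x\<bar>)"
proof (rule set_integrable_bound[of _ _ "\<lambda>x. (f x)^2 + 1"])
  show "set_integrable M A (\<lambda>x. (f x)^2 + 1)"
    using sq set_integrable_const[OF A] by (rule set_integral_add)
  show "set_borel_measurable M A (\<lambda>x. \<bar>f x\<bar>)"
    using meas unfolding set_borel_measurable_def
    by (metis (no_types, lifting) borel_measurable_abs abs_mult abs_indicator ext real_scaleR_def)
  have "\<bar>y\<bar> \<le> y^2 + 1" for y :: real
  proof -
    have "0 \<le> (\<bar>y\<bar> - 1)^2" by simp
    then show ?thesis by (simp add: power2_eq_square algebra_simps abs_mult_self_eq)
  qed
  then show "AE x in M. x \<in> A \<longrightarrow> norm \<bar>f x\<bar> \<le> norm ((f x)^2 + 1)"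
    by (intro AE_I2) simp
qed

lemma set_integral_abs_square_le:
  fixes f :: "'a \<Rightarrow> real"
  assumes A: "A \<in> sets M" "emeasure M A < \<infinity>"
    and meas: "set_borel_measurable M A f" and sq: "set_integrable M A (\<lambda>x. (f x)^2)"
  shows "(LINT x:A|M. \<bar>f x\<bar>)^2 \<le> measure M A * (LINT x:A|M. (f x)^2)"
proof -
  define I where "I = (LINT x:A|M. \<bar>f x\<bar>)"
  define S where "S = (LINT x:A|M. (f x)^2)"
  define \<mu> where "\<mu> = measure M A"
  have abs_int: "set_integrable M A (\<lambda>x. \<bar>f x\<bar>)"
    by (rule set_integrable_abs_of_square[OF A meas sq])
  have I_nonneg: "0 \<le> I" unfolding I_def by (rule set_integral_nonneg) simp
  have \<mu>_nonneg: "0 \<le> \<mu>" unfolding \<mu>_def by simp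
  \<comment> \<open>integrate \<open>2 c |f| \<le> f\<^sup>2 + c\<^sup>2\<close>, then take \<open>c = I / \<mu>\<close>\<close>
  have quadratic: "2 * c * I \<le> S + c^2 * \<mu>" for c
  proof -
    have "2 * c * I = (LINT x:A|M. 2 * c * \<bar>f x\<bar>)"
      unfolding I_def by simp
    also have "\<dots> \<le> (LINT x:A|M. (f x)^2 + c^2)"
    proof (rule set_integral_mono)
      show "set_integrable M A (\<lambda>x. 2 * c * \<bar>f x\<bar>)" using abs_int by simp
      show "set_integrable M A (\<lambda>x. (f x)^2 + c^2)"
        using sq set_integrable_const[OF A] by (rule set_integral_add)
      have "0 \<le> (\<bar>f x\<bar> - c)^2" for x by simp
      then show "2 * c * \<bar>f x\<bar> \<le> (f x)^2 + c^2" for x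
        by (simp add: power2_eq_square algebra_simps)
    qed
    also have "\<dots> = S + c^2 * \<mu>"
      unfolding S_def \<mu>_def
      using sq set_integrable_const[OF A] A by (simp add: set_integral_const)
    finally show ?thesis .
  qed
  show ?thesis
  proof (cases "\<mu> = 0")
    case True
    have "I = 0"
    proof (rule ccontr)
      assume "I \<noteq> 0"
      then show False
        using quadratic[of "(S + 1) / (2 * I)"] True I_nonneg by simp
    qed
    then show ?thesis using True unfolding I_def \<mu>_def by simp
  next
    case False
    with \<mu>_nonneg have "0 < \<mu>" by simp
    then show ?thesis
      using quadratic[of "I / \<mu>"] unfolding I_def[symmetric] S_def[symmetric] \<mu>_def[symmetric]
      by (simp add: power2_eq_square field_simps)
  qed
qed

lemma iterated_integral_sin_bound:
  fixes s :: "real \<Rightarrow> real" and g :: "real \<Rightarrow> real \<Rightarrow> real"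
  assumes T: "0 \<le> T" and meas: "set_borel_measurable lborel {0..T} s"
    and sq: "set_integrable lborel {0..T} (\<lambda>t. (s t)^2)"
  shows "\<bar>LINT t:{0..T}|lborel. s t * (LINT \<tau>:{0..t}|lborel. s \<tau> * sin (g t \<tau>))\<bar>
           \<le> T * (LINT t:{0..T}|lborel. (s t)^2)"
proof -
  define I where "I = (LINT x:{0..T}|lborel. \<bar>s x\<bar>)"
  have abs_int: "set_integrable lborel {0..T} (\<lambda>x. \<bar>s x\<bar>)"
    by (rule set_integrable_abs_of_square[OF _ _ meas sq]) (auto simp: emeasure_lborel_Icc_eq)
  have inner: "\<bar>LINT \<tau>:{0..t}|lborel. s \<tau> * sin (g t \<tau>)\<bar> \<le> I" if t: "t \<in> {0..T}" for t
  proof -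
    have abs_int_t: "set_integrable lborel {0..t} (\<lambda>\<tau>. \<bar>s \<tau>\<bar>)"
      by (rule set_integrable_subset[OF abs_int]) (use t in auto)
    have "\<bar>LINT \<tau>:{0..t}|lborel. s \<tau> * sin (g t \<tau>)\<bar> \<le> (LINT \<tau>:{0..t}|lborel. \<bar>s \<tau> * sin (g t \<tau>)\<bar>)"
      by (rule set_integral_abs_le)
    also have "\<dots> \<le> (LINT \<tau>:{0..t}|lborel. \<bar>s \<tau>\<bar>)"
      using abs_int_t by (rule set_integral_mono_nonneg) (auto simp: abs_mult mult_left_le)
    also have "\<dots> \<le> I"
      unfolding I_def set_lebesgue_integral_def using abs_int abs_int_t t
      by (intro integral_mono) (auto simp: set_integrable_def indicator_def)
    finally show ?thesis .
  qed
  have "\<bar>LINT t:{0..T}|lborel. s t * (LINT \<tau>:{0..t}|lborel. s \<tau> * sin (g t \<tau>))\<bar>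
          \<le> (LINT t:{0..T}|lborel. \<bar>s t * (LINT \<tau>:{0..t}|lborel. s \<tau> * sin (g t \<tau>))\<bar>)"
    by (rule set_integral_abs_le)
  also have "\<dots> \<le> (LINT t:{0..T}|lborel. I * \<bar>s t\<bar>)"
    using abs_int inner
    by (intro set_integral_mono_nonneg) (auto simp: abs_mult mult.commute[of I] intro!: mult_left_mono)
  also have "\<dots> = I^2" unfolding I_def by (simp add: power2_eq_square)
  also have "\<dots> \<le> T * (LINT t:{0..T}|lborel. (s t)^2)"
    unfolding I_def using set_integral_abs_square_le[OF _ _ meas sq] T by simp
  finally show ?thesis .
qed

lemma cos_ge_half: "\<bar>x :: real\<bar> \<le> 1 \<Longrightarrow> 1/2 \<le> cos x"
  using cos_monotone_0_pi_le[of "\<bar>x\<bar>" "pi/3"] pi_gt3 by (simp add: cos_60)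

lemma set_integral_cos_weight_ge_half:
  fixes s :: "real \<Rightarrow> real"
  assumes T: "0 \<le> T" and w: "\<bar>w\<bar> * T \<le> 1"
    and meas: "set_borel_measurable lborel {0..T} s"
    and sq: "set_integrable lborel {0..T} (\<lambda>t. (s t)^2)"
  shows "(LINT t:{0..T}|lborel. (s t)^2) / 2 \<le> (LINT t:{0..T}|lborel. (s t)^2 * cos (w * (t - T)))"
proof -
  note [measurable] = meas[unfolded set_borel_measurable_def]
  have indicator_inside: "(\<lambda>t. indicator {0..T} t *\<^sub>R ((s t)^2 * cos (w * (t - T)))) =
        (\<lambda>t. (indicator {0..T} t *\<^sub>R s t)^2 * cos (w * (t - T)))"
    by (auto simp: indicator_def fun_eq_iff)
  have "set_borel_measurable lborel {0..T} (\<lambda>t. (s t)^2 * cos (w * (t - T)))"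
    unfolding set_borel_measurable_def indicator_inside by measurable
  then have weighted_int: "set_integrable lborel {0..T} (\<lambda>t. (s t)^2 * cos (w * (t - T)))"
    by (rule set_integrable_bound[OF sq]) (auto intro!: AE_I2 simp: abs_mult mult_left_le)
  have "(LINT t:{0..T}|lborel. (s t)^2) / 2 = (LINT t:{0..T}|lborel. (s t)^2 / 2)"
    by simp
  also have "\<dots> \<le> (LINT t:{0..T}|lborel. (s t)^2 * cos (w * (t - T)))"
  proof (rule set_integral_mono[OF _ weighted_int])
    show "set_integrable lborel {0..T} (\<lambda>t. (s t)^2 / 2)" using sq by simp
    fix t assume t: "t \<in> {0..T}"
    have "\<bar>w * (t - T)\<bar> \<le> \<bar>w\<bar> * T" using t by (auto simp: abs_mult intro!: mult_left_mono)
    then have "1/2 \<le> cos (w * (t - T))" using w by (intro cos_ge_half) auto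
    then show "(s t)^2 / 2 \<le> (s t)^2 * cos (w * (t - T))"
      using mult_left_mono[of "1/2" "cos (w * (t - T))" "(s t)^2"] by simp
  qed
  finally show ?thesis .
qed

lemma sgn_dominant_term_bound:
  fixes a X Y S :: real
  assumes "S / 2 \<le> X" and "\<bar>Y\<bar> \<le> \<bar>a\<bar> / 8 * S"
  shows "\<bar>a\<bar> / 8 * S \<le> - sgn a * (- (a / 2) * X + Y)"
proof -
  have "\<bar>a\<bar> * (S / 2) \<le> \<bar>a\<bar> * X" using assms(1) by (rule mult_left_mono) simp
  moreover have "- sgn a * Y \<ge> - \<bar>Y\<bar>" by (cases a "0::real" rule: linorder_cases) auto
  moreover have "- sgn a * (- (a / 2) * X + Y) = \<bar>a\<bar> / 2 * X - sgn a * Y"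
    by (simp add: sgn_real_def algebra_simps)
  ultimately show ?thesis using assms(2) by linarith
qed

theorem lemma2p5:
  fixes H0 H1 :: "real^'n^'n" and \<phi> :: "nat \<Rightarrow> real^'n" and lam :: "nat \<Rightarrow> real" and K :: nat
  assumes symH0: "transpose H0 = H0" and symH1: "transpose H1 = H1"
    and orthonormal: "\<And>i j. i \<in> {1..CARD('n)} \<Longrightarrow> j \<in> {1..CARD('n)} \<Longrightarrow>
                         \<phi> i \<bullet> \<phi> j = (if i = j then 1 else 0)"
    and eigen: "\<And>j. j \<in> {1..CARD('n)} \<Longrightarrow> H0 *v \<phi> j = lam j *\<^sub>R \<phi> j"
    and K: "K \<in> {1..CARD('n)}"
    and a_nz: "(commut H1 (commut H0 H1) *v \<phi> 1) \<bullet> \<phi> K \<noteq> 0"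
  shows "\<exists>Tstar>0. \<forall>T. 0 < T \<and> T < Tstar \<longrightarrow>
           (\<forall>s::real \<Rightarrow> real. set_borel_measurable lborel {0..T} s \<and>
               set_integrable lborel {0..T} (\<lambda>t. (s t)^2) \<longrightarrow>
             - sgn ((commut H1 (commut H0 H1) *v \<phi> 1) \<bullet> \<phi> K) * Qform H0 H1 \<phi> lam K T s
               \<ge> \<bar>(commut H1 (commut H0 H1) *v \<phi> 1) \<bullet> \<phi> K\<bar> / 8
                   * (LINT t:{0..T}|lborel. (s t)^2))"
proof -
  define a where "a = (commut H1 (commut H0 H1) *v \<phi> 1) \<bullet> \<phi> K"
  define c where "c j = ((commut H0 H1 *v \<phi> 1) \<bullet> \<phi> j) * ((commut H0 H1 *v \<phi> j) \<bullet> \<phi> K)" for j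
  define C where "C = (\<Sum>j=1..CARD('n). \<bar>c j\<bar>)"
  define w where "w = lam K - lam 1"
  have C_nonneg: "0 \<le> C" unfolding C_def by (simp add: sum_nonneg)
  show ?thesis
  proof (intro exI[of _ "min (1 / (\<bar>w\<bar> + 1)) (\<bar>a\<bar> / (8 * (C + 1)))"] conjI allI impI)
    show "0 < min (1 / (\<bar>w\<bar> + 1)) (\<bar>a\<bar> / (8 * (C + 1)))"
      using a_nz C_nonneg unfolding a_def by simp
    fix T :: real and s :: "real \<Rightarrow> real"
    assume "0 < T \<and> T < min (1 / (\<bar>w\<bar> + 1)) (\<bar>a\<bar> / (8 * (C + 1)))"
    then have T: "0 \<le> T" and wT: "\<bar>w\<bar> * T \<le> 1" and CT: "C * T \<le> \<bar>a\<bar> / 8"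
      using C_nonneg by (auto simp: field_simps)
    assume "set_borel_measurable lborel {0..T} s \<and> set_integrable lborel {0..T} (\<lambda>t. (s t)^2)"
    then have meas: "set_borel_measurable lborel {0..T} s"
      and sq: "set_integrable lborel {0..T} (\<lambda>t. (s t)^2)" by auto
    define S where "S = (LINT t:{0..T}|lborel. (s t)^2)"
    have "\<bar>\<Sum>j=1..CARD('n). c j * (LINT t:{0..T}|lborel. s t * (LINT \<tau>:{0..t}|lborel.
               s \<tau> * sin (lam j * (\<tau> - t) + lam K * (t - T) + lam 1 * (T - \<tau>))))\<bar> \<le> C * T * S"
      unfolding C_def sum_distrib_right S_def
      using iterated_integral_sin_bound[OF T meas sq]
      by (intro order_trans[OF sum_abs] sum_mono) (simp add: abs_mult mult_left_mono mult.assoc)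
    also have "\<dots> \<le> \<bar>a\<bar> / 8 * S"
      using CT by (rule mult_right_mono) (simp add: S_def set_integral_nonneg)
    finally have "- sgn a * Qform H0 H1 \<phi> lam K T s \<ge> \<bar>a\<bar> / 8 * S"
      unfolding Qform_def Let_def a_def[symmetric] c_def[symmetric]
      using set_integral_cos_weight_ge_half[OF T wT meas sq]
      by (intro sgn_dominant_term_bound) (simp_all add: S_def w_def)
    then show "- sgn ((commut H1 (commut H0 H1) *v \<phi> 1) \<bullet> \<phi> K) * Qform H0 H1 \<phi> lam K T s
               \<ge> \<bar>(commut H1 (commut H0 H1) *v \<phi> 1) \<bullet> \<phi> K\<bar> / 8 * S"
      unfolding a_def .
  qed
qed

end
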